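(* Let $G$ and $H$ be connected graphs, each with at least $3$ vertices, let $\ell_1=\lambda_3(G)$, $\ell_2=\lambda_3(H)$, $n_2=|V(H)|$. Let $S=\{x,y,z\}$ be a set of three distinct vertices of $G\circ H$ such that exactly two of them lie in a common $H$-layer (i.e., $x,y\in H(u)$ and $z\in H(u')$ for some distinct $u,u'\in V(G)$). Then $G\circ H$ contains at least $\ell_2+\ell_1 n_2$ pairwise edge-disjoint $S$-trees.
   Context: For a graph $G$ and $S\subseteq V(G)$ with $|S|\ge 2$, an $S$-tree is a subgraph that is a tree containing all vertices of $S$; $\lambda(S)$ is the maximum number of pairwise edge-disjoint $S$-trees, and $\lambda_3(G)=\min\{\lambda(S): |S|=3\}$. The lexicographic product $G\circ H$ has vertex set $V(G)\times V(H)$, and $(u,v)$ is adjacent to $(u',v')$ iff either $uu'\in E(G)$, or $u=u'$ and $vv'\in E(H)$. For $u\in V(G)$, the $H$-layer $H(u)$ is the vertex set $\{(u,v): v\in V(H)\}$. *)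

theory Defs
  imports Main
begin

type_synonym 'a graph = "'a set \<times> 'a set set"

definition verts :: "'a graph \<Rightarrow> 'a set" where "verts G = fst G"
definition edges :: "'a graph \<Rightarrow> 'a set set" where "edges G = snd G"

definition graph :: "'a graph \<Rightarrow> bool" where
  "graph G \<longleftrightarrow> finite (verts G) \<and>
     (\<forall>e\<in>edges G. \<exists>u v. e = {u, v} \<and> u \<noteq> v \<and> u \<in> verts G \<and> v \<in> verts G)"

definition adj :: "'a graph \<Rightarrow> 'a \<Rightarrow> 'a \<Rightarrow> bool" where
  "adj G u v \<longleftrightarrow> {u, v} \<in> edges G"

definition connected :: "'a graph \<Rightarrow> bool" where
  "connected G \<longleftrightarrow> verts G \<noteq> {} \<and>
     (\<forall>u\<in>verts G. \<forall>v\<in>verts G. (adj G)\<^sup>*\<^sup>* u v)"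

definition is_cycle :: "'a graph \<Rightarrow> 'a list \<Rightarrow> bool" where
  "is_cycle G xs \<longleftrightarrow> length xs \<ge> 3 \<and> distinct xs \<and> set xs \<subseteq> verts G \<and>
     (\<forall>i<length xs. adj G (xs ! i) (xs ! ((i + 1) mod length xs)))"

definition acyclic_graph :: "'a graph \<Rightarrow> bool" where
  "acyclic_graph G \<longleftrightarrow> \<not> (\<exists>xs. is_cycle G xs)"

definition is_tree :: "'a graph \<Rightarrow> bool" where
  "is_tree T \<longleftrightarrow> graph T \<and> connected T \<and> acyclic_graph T"

definition subgraph :: "'a graph \<Rightarrow> 'a graph \<Rightarrow> bool" where
  "subgraph T G \<longleftrightarrow> graph T \<and> verts T \<subseteq> verts G \<and> edges T \<subseteq> edges G"

definition S_tree :: "'a graph \<Rightarrow> 'a set \<Rightarrow> 'a graph \<Rightarrow> bool" where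
  "S_tree G S T \<longleftrightarrow> subgraph T G \<and> is_tree T \<and> S \<subseteq> verts T"

definition edge_disjoint_S_trees :: "'a graph \<Rightarrow> 'a set \<Rightarrow> nat \<Rightarrow> (nat \<Rightarrow> 'a graph) \<Rightarrow> bool" where
  "edge_disjoint_S_trees G S k T \<longleftrightarrow>
     (\<forall>i<k. S_tree G S (T i)) \<and>
     (\<forall>i<k. \<forall>j<k. i \<noteq> j \<longrightarrow> edges (T i) \<inter> edges (T j) = {})"

definition lambdaS :: "'a graph \<Rightarrow> 'a set \<Rightarrow> nat" where
  "lambdaS G S = Max {k. \<exists>T. edge_disjoint_S_trees G S k T}"

definition lambda3 :: "'a graph \<Rightarrow> nat" where
  "lambda3 G = Min {lambdaS G S | S. S \<subseteq> verts G \<and> card S = 3}"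

definition lex_prod :: "'a graph \<Rightarrow> 'b graph \<Rightarrow> ('a \<times> 'b) graph" where
  "lex_prod G H = (verts G \<times> verts H,
     {{(u, v), (u', v')} | u v u' v'.
        u \<in> verts G \<and> u' \<in> verts G \<and> v \<in> verts H \<and> v' \<in> verts H \<and>
        ({u, u'} \<in> edges G \<or> (u = u' \<and> {v, v'} \<in> edges H))})"

end

theory Submission
  imports Defs
begin

text \<open>
  Write \<open>x = (u, v1)\<close>, \<open>y = (u, v2)\<close>, \<open>z = (u', w)\<close>, pick a third vertex \<open>t\<close> of \<open>G\<close>
  and a vertex \<open>w' \<notin> {v1, v2}\<close> of \<open>H\<close> with \<open>w \<in> {v1, v2, w'}\<close>. Take \<open>\<lambda>({u, u', t}) \<ge> \<ell>\<^sub>1\<close>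
  edge-disjoint trees \<open>T\<^sub>j\<close> of \<open>G\<close> and \<open>\<lambda>({v1, v2, w'}) \<ge> \<ell>\<^sub>2\<close> edge-disjoint trees \<open>R\<^sub>i\<close> of \<open>H\<close>.
  For every \<open>j\<close> and every \<open>h \<in> V(H)\<close>, copy \<open>T\<^sub>j\<close> to height \<open>h\<close> and join \<open>x\<close>, \<open>y\<close> to the copy
  of a neighbour \<open>a\<^sub>j\<close> of \<open>u\<close> and \<open>z\<close> to the copy of a neighbour \<open>b\<^sub>j\<close> of \<open>u'\<close>; the third
  vertex guarantees that \<open>u a\<^sub>j\<close> and \<open>u' b\<^sub>j\<close> are different edges. These \<open>\<ell>\<^sub>1 n\<^sub>2\<close> trees are
  edge-disjoint: different copies of one \<open>T\<^sub>j\<close> meet in no edge, and trees built from different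
  \<open>T\<^sub>j\<close> have edge-disjoint projections to \<open>G\<close>. For every \<open>i\<close>, copy \<open>R\<^sub>i\<close> into every \<open>H\<close>-layer
  and join the copies along the edges \<open>p q\<close> of \<open>T\<^sub>0\<close> by one of the edges \<open>(p, w') (q, c\<^sub>i)\<close>,
  \<open>(p, c\<^sub>i) (q, w')\<close>, where \<open>c\<^sub>i\<close> is a neighbour of \<open>w'\<close> in \<open>R\<^sub>i\<close>.
\<close>

definition edge_rel :: "'a set set \<Rightarrow> 'a \<Rightarrow> 'a \<Rightarrow> bool" where
  "edge_rel F a b \<longleftrightarrow> {a, b} \<in> F"

lemma symp_edge_rel: "symp (edge_rel F)"
  by (rule sympI) (simp add: edge_rel_def insert_commute)

lemma edge_rel_rtranclp_sym: "(edge_rel F)\<^sup>*\<^sup>* a b \<Longrightarrow> (edge_rel F)\<^sup>*\<^sup>* b a"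
  using symp_rtranclp[OF symp_edge_rel] by (rule sympD)

lemma edge_rel_edges: "edge_rel (edges G) = adj G"
  by (simp add: fun_eq_iff edge_rel_def adj_def)

lemma rtranclp_lift:
  assumes "r\<^sup>*\<^sup>* a b" and "\<And>p q. r p q \<Longrightarrow> s\<^sup>*\<^sup>* (f p) (f q)"
  shows "s\<^sup>*\<^sup>* (f a) (f b)"
  using assms(1) by induction (auto intro: rtranclp_trans assms(2))

lemma graph_edgesE:
  assumes "graph G" "e \<in> edges G"
  obtains p q where "e = {p, q}" "p \<noteq> q" "p \<in> verts G" "q \<in> verts G"
  using assms by (auto simp: graph_def)

lemma graph_edgeD:
  assumes "graph G" "{p, q} \<in> edges G"
  shows "p \<noteq> q" "p \<in> verts G" "q \<in> verts G"
  using graph_edgesE[OF assms] by (metis doubleton_eq_iff)+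

lemma finite_edges:
  assumes "graph G" shows "finite (edges G)"
proof (rule finite_subset)
  show "edges G \<subseteq> Pow (verts G)"
  proof
    fix e assume "e \<in> edges G"
    with assms show "e \<in> Pow (verts G)" by (elim graph_edgesE) auto
  qed
  show "finite (Pow (verts G))" using assms unfolding graph_def by simp
qed

definition component :: "'a set set \<Rightarrow> 'a \<Rightarrow> 'a graph" where
  "component F s = ({v. (edge_rel F)\<^sup>*\<^sup>* s v}, {e \<in> F. e \<subseteq> {v. (edge_rel F)\<^sup>*\<^sup>* s v}})"

lemma verts_component: "verts (component F s) = {v. (edge_rel F)\<^sup>*\<^sup>* s v}"
  and edges_component: "edges (component F s) = {e \<in> F. e \<subseteq> {v. (edge_rel F)\<^sup>*\<^sup>* s v}}"
  by (simp_all add: component_def verts_def edges_def)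

lemma subgraph_component:
  assumes G: "graph G" and F: "F \<subseteq> edges G" and s: "s \<in> verts G"
  shows "subgraph (component F s) G"
proof -
  have reach: "v \<in> verts G" if "(edge_rel F)\<^sup>*\<^sup>* s v" for v
    using that by induction (use s F graph_edgeD[OF G] in \<open>auto simp: edge_rel_def\<close>)
  have "verts (component F s) \<subseteq> verts G" using reach by (auto simp: verts_component)
  moreover have "finite (verts G)" using G by (simp add: graph_def)
  ultimately have "finite (verts (component F s))" by (rule finite_subset)
  moreover have "\<exists>p q. e = {p, q} \<and> p \<noteq> q \<and> p \<in> verts (component F s) \<and> q \<in> verts (component F s)"
    if "e \<in> edges (component F s)" for e
  proof -
    have "e \<in> edges G" "e \<subseteq> verts (component F s)"
      using that F by (auto simp: edges_component verts_component)
    then show ?thesis using G by (elim graph_edgesE) auto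
  qed
  ultimately show ?thesis
    using F \<open>verts (component F s) \<subseteq> verts G\<close>
    unfolding subgraph_def graph_def by (auto simp: edges_component)
qed

lemma connected_component: "connected (component F s)"
proof -
  have reach: "(adj (component F s))\<^sup>*\<^sup>* s v" if "(edge_rel F)\<^sup>*\<^sup>* s v" for v
    using that
  proof induction
    case (step v v')
    then have "adj (component F s) v v'"
      by (auto simp: adj_def edge_rel_def edges_component intro: rtranclp.rtrancl_into_rtrancl)
    with step.IH show ?case by (rule rtranclp.rtrancl_into_rtrancl)
  qed simp
  have "(adj (component F s))\<^sup>*\<^sup>* v v'"
    if "v \<in> verts (component F s)" "v' \<in> verts (component F s)" for v v'
  proof -
    have "(adj (component F s))\<^sup>*\<^sup>* v s"
      using reach that(1) symp_rtranclp[of "adj (component F s)"]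
      by (auto simp: verts_component symp_def adj_def insert_commute)
    then show ?thesis using reach that(2) by (auto simp: verts_component intro: rtranclp_trans)
  qed
  then show ?thesis by (auto simp: connected_def verts_component)
qed

lemma cycle_bypass:
  assumes cyc: "is_cycle T xs" and TF: "edges T \<subseteq> F"
  shows "{xs ! 0, xs ! 1} \<in> F" "(edge_rel (F - {{xs ! 0, xs ! 1}}))\<^sup>*\<^sup>* (xs ! 1) (xs ! 0)"
proof -
  define n where "n = length xs"
  have n: "3 \<le> n" and dist: "distinct xs"
    and adj: "\<And>i. i < n \<Longrightarrow> {xs ! i, xs ! ((i + 1) mod n)} \<in> F"
    using cyc TF by (auto simp: is_cycle_def n_def adj_def)
  show "{xs ! 0, xs ! 1} \<in> F" using adj[of 0] n by simp
  let ?F' = "F - {{xs ! 0, xs ! 1}}"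
  have step: "edge_rel ?F' (xs ! i) (xs ! ((i + 1) mod n))" if "1 \<le> i" "i < n" for i
  proof -
    have len: "xs \<noteq> []" "2 < length xs" using n by (auto simp: n_def)
    then have "xs ! 2 \<noteq> xs ! 0" using dist by (simp add: nth_eq_iff_index_eq)
    then have "xs ! ((i + 1) mod n) \<noteq> xs ! 0" if "i = 1"
      using that n by (simp add: numeral_2_eq_2)
    moreover have "xs ! i \<noteq> xs ! 0" "xs ! i = xs ! 1 \<longrightarrow> i = 1"
      using that len dist by (auto simp: nth_eq_iff_index_eq n_def)
    ultimately show ?thesis using adj[OF that(2)] by (auto simp: edge_rel_def doubleton_eq_iff)
  qed
  have "(edge_rel ?F')\<^sup>*\<^sup>* (xs ! 1) (xs ! (k mod n))" if "1 \<le> k" "k \<le> n" for k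
    using that
  proof (induction k)
    case (Suc k)
    show ?case
    proof (cases "k = 0")
      case False
      with Suc have "(edge_rel ?F')\<^sup>*\<^sup>* (xs ! 1) (xs ! k)" by simp
      moreover have "edge_rel ?F' (xs ! k) (xs ! (Suc k mod n))"
        using step[of k] False Suc.prems by simp
      ultimately show ?thesis by (rule rtranclp.rtrancl_into_rtrancl)
    qed (use n in simp)
  qed simp
  from this[of n] show "(edge_rel ?F')\<^sup>*\<^sup>* (xs ! 1) (xs ! 0)" using n by simp
qed

lemma rtranclp_edge_rel_Diff_redundant:
  assumes "(edge_rel (F - {{a, b}}))\<^sup>*\<^sup>* a b" and "(edge_rel F)\<^sup>*\<^sup>* p q"
  shows "(edge_rel (F - {{a, b}}))\<^sup>*\<^sup>* p q"
proof -
  have "(edge_rel (F - {{a, b}}))\<^sup>*\<^sup>* (id p) (id q)"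
    using assms(2)
  proof (rule rtranclp_lift)
    fix x y assume "edge_rel F x y"
    then show "(edge_rel (F - {{a, b}}))\<^sup>*\<^sup>* (id x) (id y)"
      using assms(1) edge_rel_rtranclp_sym[OF assms(1)]
      by (cases "{x, y} = {a, b}") (auto simp: edge_rel_def doubleton_eq_iff)
  qed
  then show ?thesis by simp
qed

lemma acyclic_component:
  assumes reach: "\<forall>v\<in>S. (edge_rel F)\<^sup>*\<^sup>* s v"
    and essential: "\<And>e. e \<in> F \<Longrightarrow> \<not> (\<forall>v\<in>S. (edge_rel (F - {e}))\<^sup>*\<^sup>* s v)"
  shows "acyclic_graph (component F s)"
  unfolding acyclic_graph_def
proof
  assume "\<exists>xs. is_cycle (component F s) xs"
  then obtain xs where "is_cycle (component F s) xs" ..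
  moreover have "edges (component F s) \<subseteq> F" by (auto simp: edges_component)
  ultimately have e: "{xs ! 0, xs ! 1} \<in> F"
    and bypass: "(edge_rel (F - {{xs ! 0, xs ! 1}}))\<^sup>*\<^sup>* (xs ! 1) (xs ! 0)"
    by (rule cycle_bypass)+
  have "(edge_rel (F - {{xs ! 1, xs ! 0}}))\<^sup>*\<^sup>* (xs ! 1) (xs ! 0)"
    using bypass by (simp add: insert_commute)
  from rtranclp_edge_rel_Diff_redundant[OF this]
  have "\<forall>v\<in>S. (edge_rel (F - {{xs ! 1, xs ! 0}}))\<^sup>*\<^sup>* s v" using reach by blast
  moreover have "{xs ! 1, xs ! 0} \<in> F" using e by (simp add: insert_commute)
  ultimately show False using essential by blast
qed

text \<open>A cardinality-minimal \<open>F0 \<subseteq> F\<close> still connecting \<open>S\<close> has no redundant edge, so the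
  component of \<open>s\<close> in \<open>F0\<close> is acyclic.\<close>
lemma S_tree_within:
  assumes G: "graph G" and F: "F \<subseteq> edges G" and S: "S \<subseteq> verts G" "s \<in> S"
    and reach: "\<forall>v\<in>S. (edge_rel F)\<^sup>*\<^sup>* s v"
  shows "\<exists>T. S_tree G S T \<and> edges T \<subseteq> F"
proof -
  define P where "P F' \<longleftrightarrow> F' \<subseteq> F \<and> (\<forall>v\<in>S. (edge_rel F')\<^sup>*\<^sup>* s v)" for F'
  obtain F0 where P0: "P F0" and least: "\<And>F'. P F' \<Longrightarrow> card F0 \<le> card F'"
    using ex_has_least_nat[of P F card] reach unfolding P_def by blast
  have F0: "F0 \<subseteq> F" and reach0: "\<forall>v\<in>S. (edge_rel F0)\<^sup>*\<^sup>* s v"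
    using P0 by (auto simp: P_def)
  have fin: "finite F0" using finite_subset[OF F0 finite_subset[OF F finite_edges[OF G]]] .
  have "\<not> (\<forall>v\<in>S. (edge_rel (F0 - {e}))\<^sup>*\<^sup>* s v)" if "e \<in> F0" for e
    using least[of "F0 - {e}"] F0 card_Diff1_less[OF fin that] unfolding P_def by auto
  then have "acyclic_graph (component F0 s)" using acyclic_component[OF reach0] by blast
  moreover have sub: "subgraph (component F0 s) G"
    using subgraph_component[OF G _ ] F0 F S by blast
  ultimately have "is_tree (component F0 s)"
    using connected_component[of F0 s] by (simp add: is_tree_def subgraph_def)
  moreover note sub
  moreover have "S \<subseteq> verts (component F0 s)" using reach0 by (auto simp: verts_component)
  ultimately show ?thesis
    using F0 unfolding S_tree_def by (intro exI[of _ "component F0 s"]) (auto simp: edges_component)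
qed

lemma S_tree_edges_nonempty:
  assumes "S_tree G S T" "a \<in> S" "b \<in> S" "a \<noteq> b"
  shows "edges T \<noteq> {}"
proof -
  have "(adj T)\<^sup>*\<^sup>* a b" using assms unfolding S_tree_def is_tree_def connected_def by blast
  then obtain c where "adj T a c" using assms(4) by (metis converse_rtranclpE)
  then show ?thesis unfolding adj_def by blast
qed

lemma edge_disjoint_S_treesD:
  assumes "edge_disjoint_S_trees G S k T" "i < k"
  shows "graph (T i)" "connected (T i)" "S \<subseteq> verts (T i)"
    "verts (T i) \<subseteq> verts G" "edges (T i) \<subseteq> edges G"
  using assms unfolding edge_disjoint_S_trees_def S_tree_def subgraph_def is_tree_def by auto

lemma edge_disjoint_S_trees_disjoint:
  assumes "edge_disjoint_S_trees G S k T" "i < k" "j < k" "i \<noteq> j"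
    "e \<in> edges (T i)" "e \<in> edges (T j)"
  shows False
  using assms unfolding edge_disjoint_S_trees_def by blast

lemma edge_disjoint_S_trees_le:
  "edge_disjoint_S_trees G S k T \<Longrightarrow> m \<le> k \<Longrightarrow> edge_disjoint_S_trees G S m T"
  unfolding edge_disjoint_S_trees_def by auto

lemma edge_disjoint_S_trees_le_card_edges:
  assumes G: "graph G" and ab: "a \<in> S" "b \<in> S" "a \<noteq> b"
    and T: "edge_disjoint_S_trees G S k T"
  shows "k \<le> card (edges G)"
proof -
  have "\<forall>i\<in>{..<k}. \<exists>e. e \<in> edges (T i)"
    using T S_tree_edges_nonempty[OF _ ab] unfolding edge_disjoint_S_trees_def by blast
  then obtain e where e: "\<And>i. i < k \<Longrightarrow> e i \<in> edges (T i)" by (metis lessThan_iff)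
  have "inj_on e {..<k}"
    by (rule inj_onI) (use e edge_disjoint_S_trees_disjoint[OF T] in fastforce)
  moreover have "e ` {..<k} \<subseteq> edges G"
    using e edge_disjoint_S_treesD(5)[OF T] by blast
  ultimately show ?thesis using card_inj_on_le[OF _ _ finite_edges[OF G]] by fastforce
qed

lemma
  assumes G: "graph G" and ab: "a \<in> S" "b \<in> S" "a \<noteq> b"
  shows lambdaS_attained: "\<exists>T. edge_disjoint_S_trees G S (lambdaS G S) T"
    and le_lambdaS: "edge_disjoint_S_trees G S k T \<Longrightarrow> k \<le> lambdaS G S"
proof -
  define K where "K = {k. \<exists>T. edge_disjoint_S_trees G S k T}"
  have "K \<subseteq> {..card (edges G)}"
    using edge_disjoint_S_trees_le_card_edges[OF G ab] by (auto simp: K_def)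
  then have fin: "finite K" by (rule finite_subset) simp
  have "0 \<in> K" by (auto simp: K_def edge_disjoint_S_trees_def)
  then have "Max K \<in> K" using fin Max_in by blast
  then show "\<exists>T. edge_disjoint_S_trees G S (lambdaS G S) T" by (simp add: K_def lambdaS_def)
  show "edge_disjoint_S_trees G S k T \<Longrightarrow> k \<le> lambdaS G S"
    using fin Max_ge unfolding lambdaS_def K_def[symmetric] by (auto simp: K_def)
qed

lemma lambdaS_pos:
  assumes G: "graph G" and "connected G" and S: "S \<subseteq> verts G" and ab: "a \<in> S" "b \<in> S" "a \<noteq> b"
  shows "0 < lambdaS G S"
proof -
  have "\<forall>v\<in>S. (edge_rel (edges G))\<^sup>*\<^sup>* a v"
    using assms unfolding edge_rel_edges connected_def by blast
  then obtain T where "S_tree G S T" using S_tree_within[OF G _ S ab(1)] by blast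
  then have "edge_disjoint_S_trees G S 1 (\<lambda>_. T)" by (simp add: edge_disjoint_S_trees_def)
  then show ?thesis using le_lambdaS[OF G ab] by fastforce
qed

lemma lambda3_le_lambdaS:
  assumes G: "graph G" and "S \<subseteq> verts G" "card S = 3"
  shows "lambda3 G \<le> lambdaS G S"
  unfolding lambda3_def
proof (rule Min_le)
  have "finite (Pow (verts G))" using G by (simp add: graph_def)
  then have "finite {S. S \<subseteq> verts G \<and> card S = 3}" by (rule rev_finite_subset) auto
  then show "finite {lambdaS G S | S. S \<subseteq> verts G \<and> card S = 3}"
    by (simp add: setcompr_eq_image)
qed (use assms in auto)

lemma edge_disjoint_S_trees_of_edge_sets:
  assumes G: "graph G" and S: "S \<subseteq> verts G" "s \<in> S" and I: "finite I"
    and E: "\<And>i. i \<in> I \<Longrightarrow> E i \<subseteq> edges G"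
    and reach: "\<And>i v. i \<in> I \<Longrightarrow> v \<in> S \<Longrightarrow> (edge_rel (E i))\<^sup>*\<^sup>* s v"
    and disj: "\<And>i j. i \<in> I \<Longrightarrow> j \<in> I \<Longrightarrow> i \<noteq> j \<Longrightarrow> E i \<inter> E j = {}"
  shows "\<exists>T. edge_disjoint_S_trees G S (card I) T"
proof -
  obtain f where f: "bij_betw f {..<card I} I"
    using ex_bij_betw_nat_finite[OF I] by (auto simp: atLeast0LessThan)
  have "\<forall>k\<in>{..<card I}. \<exists>T. S_tree G S T \<and> edges T \<subseteq> E (f k)"
    using S_tree_within[OF G E S] reach bij_betw_apply[OF f] by blast
  then obtain T where T: "\<And>k. k < card I \<Longrightarrow> S_tree G S (T k) \<and> edges (T k) \<subseteq> E (f k)"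
    by (metis lessThan_iff)
  have "edges (T k) \<inter> edges (T k') = {}" if "k < card I" "k' < card I" "k \<noteq> k'" for k k'
  proof -
    have "f k \<noteq> f k'" using that bij_betw_imp_inj_on[OF f] by (auto simp: inj_on_def)
    then show ?thesis using T[OF that(1)] T[OF that(2)] disj bij_betw_apply[OF f] that by fastforce
  qed
  then show ?thesis using T unfolding edge_disjoint_S_trees_def by blast
qed

lemma verts_lex_prod: "verts (lex_prod G H) = verts G \<times> verts H"
  by (simp add: lex_prod_def verts_def)

lemma lex_prod_edge_across:
  assumes "{p, q} \<in> edges G" "p \<in> verts G" "q \<in> verts G" "s \<in> verts H" "r \<in> verts H"
  shows "{(p, s), (q, r)} \<in> edges (lex_prod G H)"
  using assms unfolding lex_prod_def edges_def verts_def by fastforce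

lemma lex_prod_edge_within:
  assumes "{s, r} \<in> edges H" "p \<in> verts G" "s \<in> verts H" "r \<in> verts H"
  shows "{(p, s), (p, r)} \<in> edges (lex_prod G H)"
  using assms unfolding lex_prod_def edges_def verts_def by fastforce

lemma graph_lex_prod:
  assumes G: "graph G" and H: "graph H"
  shows "graph (lex_prod G H)"
  unfolding graph_def verts_lex_prod
proof
  show "finite (verts G \<times> verts H)" using G H by (simp add: graph_def)
  show "\<forall>e\<in>edges (lex_prod G H). \<exists>x y. e = {x, y} \<and> x \<noteq> y \<and>
      x \<in> verts G \<times> verts H \<and> y \<in> verts G \<times> verts H"
  proof
    fix e assume "e \<in> edges (lex_prod G H)"
    then obtain p s q r where e: "e = {(p, s), (q, r)}"
      and V: "p \<in> verts G" "q \<in> verts G" "s \<in> verts H" "r \<in> verts H"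
      and E: "{p, q} \<in> edges G \<or> (p = q \<and> {s, r} \<in> edges H)"
      unfolding lex_prod_def edges_def verts_def by auto
    have "(p, s) \<noteq> (q, r)" using E graph_edgeD(1)[OF G] graph_edgeD(1)[OF H] by auto
    then show "\<exists>x y. e = {x, y} \<and> x \<noteq> y \<and> x \<in> verts G \<times> verts H \<and> y \<in> verts G \<times> verts H"
      using e V by blast
  qed
qed

lemma doubleton_pair_eqD:
  "{(p, s), (q, r)} = {(p', s'), (q', r')} \<Longrightarrow> {p, q} = {p', q'} \<and> {s, r} = {s', r'}"
  by (auto simp: doubleton_eq_iff)

lemma card_ge_3_obtain_third:
  assumes "finite A" "3 \<le> card A"
  obtains t where "t \<in> A" "t \<noteq> p" "t \<noteq> q"
proof -
  have "card {p, q} \<le> 2" by (simp add: card_insert_if)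
  then have "\<not> A \<subseteq> {p, q}" using card_mono[of "{p, q}" A] assms by auto
  then show ?thesis using that by blast
qed

lemma card_ge_3_obtain_third_covering:
  assumes "finite A" "3 \<le> card A" "w \<in> A"
  obtains w' where "w' \<in> A" "w' \<noteq> p" "w' \<noteq> q" "w \<in> {p, q, w'}"
proof (cases "w \<in> {p, q}")
  case True
  obtain w' where "w' \<in> A" "w' \<noteq> p" "w' \<noteq> q" by (rule card_ge_3_obtain_third[OF assms(1,2)])
  with True that show ?thesis by blast
qed (use that assms(3) in auto)

text \<open>Without the third vertex \<open>t\<close>, the single edge \<open>u u'\<close> could be the only edge at both ends.\<close>
lemma connected_neighbours_distinct_edges:
  assumes T: "connected T" and V: "u \<in> verts T" "u' \<in> verts T" "t \<in> verts T"
    and d: "u \<noteq> u'" "t \<noteq> u" "t \<noteq> u'"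
  obtains a b where "adj T u a" "adj T u' b" "\<not> (a = u' \<and> b = u)"
proof -
  have r: "(adj T)\<^sup>*\<^sup>* u t" "(adj T)\<^sup>*\<^sup>* u' t" using T V unfolding connected_def by auto
  obtain a0 where a0: "adj T u a0" using r(1) d by (metis converse_rtranclpE)
  obtain b0 where b0: "adj T u' b0" using r(2) d by (metis converse_rtranclpE)
  show ?thesis
  proof (rule ccontr)
    assume "\<not> thesis"
    then have na: "adj T u a \<Longrightarrow> a = u'" and nb: "adj T u' b \<Longrightarrow> b = u" for a b
      using that a0 b0 by blast+
    have "(adj T)\<^sup>*\<^sup>* u v \<Longrightarrow> v \<in> {u, u'}" for v
      by (induction rule: rtranclp_induct) (auto dest: na nb)
    then show False using r(1) d by auto
  qed
qed

locale lex_prod_tree_packing =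
  fixes G :: "'a graph" and H :: "'b graph"
    and u u' :: 'a and v1 v2 w w' :: 'b
    and SG :: "'a set" and kG :: nat and TG :: "nat \<Rightarrow> 'a graph" and a b :: "nat \<Rightarrow> 'a"
    and kH :: nat and TH :: "nat \<Rightarrow> 'b graph" and c :: "nat \<Rightarrow> 'b"
  assumes G: "graph G" and H: "graph H"
    and uu': "u \<noteq> u'" and u_SG: "u \<in> SG" and u'_SG: "u' \<in> SG"
    and v1: "v1 \<in> verts H" and v2: "v2 \<in> verts H" and w': "w' \<in> verts H"
    and w'_v1: "w' \<noteq> v1" and w'_v2: "w' \<noteq> v2" and w: "w \<in> {v1, v2, w'}"
    and TG: "edge_disjoint_S_trees G SG kG TG" and kG: "0 < kG"
    and TH: "edge_disjoint_S_trees H {v1, v2, w'} kH TH"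
    and ab: "\<And>j. j < kG \<Longrightarrow>
      {u, a j} \<in> edges (TG j) \<and> {u', b j} \<in> edges (TG j) \<and> \<not> (a j = u' \<and> b j = u)"
    and c: "\<And>i. i < kH \<Longrightarrow> {w', c i} \<in> edges (TH i)"
begin

lemma TG_edgeD:
  assumes "j < kG" "{p, q} \<in> edges (TG j)"
  shows "p \<noteq> q" "p \<in> verts G" "q \<in> verts G" "{p, q} \<in> edges G"
  using graph_edgeD[OF edge_disjoint_S_treesD(1)[OF TG] assms(2)]
    edge_disjoint_S_treesD(4,5)[OF TG] assms by blast+

lemma TH_edgeD:
  assumes "i < kH" "{g, d} \<in> edges (TH i)"
  shows "g \<noteq> d" "g \<in> verts (TH i)" "d \<in> verts (TH i)" "g \<in> verts H" "d \<in> verts H"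
    "{g, d} \<in> edges H"
  using graph_edgeD[OF edge_disjoint_S_treesD(1)[OF TH] assms(2)]
    edge_disjoint_S_treesD(4,5)[OF TH] assms by blast+

lemma u_verts: "u \<in> verts G" and u'_verts: "u' \<in> verts G"
  using edge_disjoint_S_treesD(3,4)[OF TG kG] u_SG u'_SG by auto

lemma ab_props:
  assumes "j < kG"
  shows "a j \<noteq> u" "b j \<noteq> u'" "a j \<in> verts G" "b j \<in> verts G"
  using ab[OF assms] TG_edgeD[OF assms] by metis+

lemma c_props:
  assumes "i < kH"
  shows "c i \<noteq> w'" "c i \<in> verts (TH i)" "c i \<in> verts H"
  using TH_edgeD[OF assms c[OF assms]] by auto

lemma TG_connects: "j < kG \<Longrightarrow> (adj (TG j))\<^sup>*\<^sup>* u u'"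
  using edge_disjoint_S_treesD(2,3)[OF TG] u_SG u'_SG unfolding connected_def by blast

definition G_copy :: "nat \<Rightarrow> 'b \<Rightarrow> ('a \<times> 'b) set set" where
  "G_copy j h = {{(p, h), (q, h)} | p q. {p, q} \<in> edges (TG j)}"

definition G_tree_edges :: "nat \<Rightarrow> 'b \<Rightarrow> ('a \<times> 'b) set set" where
  "G_tree_edges j h = G_copy j h \<union> {{(u, v1), (a j, h)}, {(u, v2), (a j, h)}, {(u', w), (b j, h)}}"

definition G_tree0_edges :: "('a \<times> 'b) set set" where
  "G_tree0_edges = (\<Union>h\<in>verts H. G_tree_edges 0 h)"

definition H_copies :: "nat \<Rightarrow> ('a \<times> 'b) set set" where
  "H_copies i = {{(p, g), (p, d)} | p g d. p \<in> verts G \<and> {g, d} \<in> edges (TH i)}"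

definition H_links :: "nat \<Rightarrow> ('a \<times> 'b) set set" where
  "H_links i = {{(p, g), (q, d)} | p q g d. {p, q} \<in> edges (TG 0) \<and> {g, d} = {w', c i}}
     - G_tree0_edges"

definition H_tree_edges :: "nat \<Rightarrow> ('a \<times> 'b) set set" where
  "H_tree_edges i = H_copies i \<union> H_links i"

lemma G_tree_edges_subset:
  assumes j: "j < kG" and h: "h \<in> verts H"
  shows "G_tree_edges j h \<subseteq> edges (lex_prod G H)"
proof -
  have "G_copy j h \<subseteq> edges (lex_prod G H)"
    using TG_edgeD[OF j] h by (auto simp: G_copy_def intro: lex_prod_edge_across)
  moreover have "{u, a j} \<in> edges G" "{u', b j} \<in> edges G"
    using ab[OF j] TG_edgeD(4)[OF j] by auto
  then have "{{(u, v1), (a j, h)}, {(u, v2), (a j, h)}, {(u', w), (b j, h)}} \<subseteq> edges (lex_prod G H)"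
    using ab_props[OF j] u_verts u'_verts v1 v2 w w' h by (auto intro!: lex_prod_edge_across)
  ultimately show ?thesis by (simp add: G_tree_edges_def)
qed

lemma H_tree_edges_subset:
  assumes i: "i < kH"
  shows "H_tree_edges i \<subseteq> edges (lex_prod G H)"
proof -
  have "H_copies i \<subseteq> edges (lex_prod G H)"
    using TH_edgeD[OF i] by (auto simp: H_copies_def intro: lex_prod_edge_within)
  moreover have "H_links i \<subseteq> edges (lex_prod G H)"
    using TG_edgeD[OF kG] c_props[OF i] w'
    by (auto simp: H_links_def doubleton_eq_iff intro: lex_prod_edge_across)
  ultimately show ?thesis by (simp add: H_tree_edges_def)
qed

lemma G_copy_edge: "{p, q} \<in> edges (TG j) \<Longrightarrow> edge_rel (G_tree_edges j h) (p, h) (q, h)"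
  unfolding edge_rel_def G_tree_edges_def G_copy_def by blast

lemma G_copy_connects:
  assumes "(adj (TG j))\<^sup>*\<^sup>* p q"
  shows "(edge_rel (G_tree_edges j h))\<^sup>*\<^sup>* (p, h) (q, h)"
proof -
  have "(edge_rel (G_tree_edges j h))\<^sup>*\<^sup>* ((\<lambda>p. (p, h)) p) ((\<lambda>p. (p, h)) q)"
    using assms by (rule rtranclp_lift) (simp add: adj_def G_copy_edge r_into_rtranclp)
  then show ?thesis by simp
qed

lemma G_tree_edges_connect:
  assumes j: "j < kG"
  shows "(edge_rel (G_tree_edges j h))\<^sup>*\<^sup>* (u, v1) (u, v2)"
    "(edge_rel (G_tree_edges j h))\<^sup>*\<^sup>* (u, v1) (u', w)"
proof -
  let ?R = "edge_rel (G_tree_edges j h)"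
  have start: "?R\<^sup>*\<^sup>* (u, v1) (a j, h)"
    by (auto simp: edge_rel_def G_tree_edges_def)
  also have "?R (a j, h) (u, v2)"
    by (auto simp: edge_rel_def G_tree_edges_def insert_commute)
  finally show "?R\<^sup>*\<^sup>* (u, v1) (u, v2)" .
  note start
  also have "?R (a j, h) (u, h)"
    using ab[OF j] by (intro G_copy_edge) (simp add: insert_commute)
  also have "?R\<^sup>*\<^sup>* (u, h) (u', h)"
    by (rule G_copy_connects[OF TG_connects[OF j]])
  also have "?R (u', h) (b j, h)"
    using ab[OF j] by (intro G_copy_edge) simp
  also have "?R (b j, h) (u', w)"
    by (auto simp: edge_rel_def G_tree_edges_def insert_commute)
  finally show "?R\<^sup>*\<^sup>* (u, v1) (u', w)" .
qed

lemma H_copies_connect: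
  assumes i: "i < kH" and p: "p \<in> verts G" and g: "g \<in> verts (TH i)" and d: "d \<in> verts (TH i)"
  shows "(edge_rel (H_tree_edges i))\<^sup>*\<^sup>* (p, g) (p, d)"
proof -
  have "(adj (TH i))\<^sup>*\<^sup>* g d" using edge_disjoint_S_treesD(2)[OF TH i] g d
    unfolding connected_def by blast
  then have "(edge_rel (H_tree_edges i))\<^sup>*\<^sup>* ((\<lambda>g. (p, g)) g) ((\<lambda>g. (p, g)) d)"
  proof (rule rtranclp_lift)
    fix g' d' assume "adj (TH i) g' d'"
    then have "edge_rel (H_tree_edges i) (p, g') (p, d')"
      using p unfolding adj_def edge_rel_def H_tree_edges_def H_copies_def by blast
    then show "(edge_rel (H_tree_edges i))\<^sup>*\<^sup>* ((\<lambda>g. (p, g)) g') ((\<lambda>g. (p, g)) d')" by simp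
  qed
  then show ?thesis by simp
qed

lemma G_tree0_edge_at_w':
  assumes "g \<noteq> w'" "{(p, w'), (q, g)} \<in> G_tree0_edges"
  shows "(q = u \<and> p = a 0) \<or> (p = u' \<and> w = w' \<and> q = b 0) \<or> (q = u' \<and> g = w \<and> p = b 0)"
proof -
  obtain h where "{(p, w'), (q, g)} \<in> G_tree_edges 0 h"
    using assms(2) unfolding G_tree0_edges_def by blast
  moreover have "{(p, w'), (q, g)} \<notin> G_copy 0 h"
    using assms(1) by (auto simp: G_copy_def doubleton_eq_iff)
  ultimately show ?thesis
    using w'_v1 w'_v2 by (auto simp: G_tree_edges_def doubleton_eq_iff)
qed

text \<open>Both links over \<open>p q\<close> could only be attachment edges at \<open>u\<close> and \<open>u'\<close>, which would force
  \<open>a 0 = u\<close>, \<open>b 0 = u'\<close>, \<open>u = u'\<close>, \<open>c i = w'\<close> or \<open>{u, a 0} = {u', b 0}\<close>.\<close>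
lemma H_link_available:
  assumes i: "i < kH" and pq: "{p, q} \<in> edges (TG 0)"
  shows "{(p, w'), (q, c i)} \<notin> G_tree0_edges \<or> {(q, w'), (p, c i)} \<notin> G_tree0_edges"
  using G_tree0_edge_at_w'[OF c_props(1)[OF i], of p q] G_tree0_edge_at_w'[OF c_props(1)[OF i], of q p]
    TG_edgeD(1)[OF kG pq] ab[OF kG] ab_props(1,2)[OF kG] uu' c_props(1)[OF i] by auto

lemma H_links_connect:
  assumes i: "i < kH" and pq: "{p, q} \<in> edges (TG 0)"
  shows "(edge_rel (H_tree_edges i))\<^sup>*\<^sup>* (p, w') (q, w')"
proof -
  let ?R = "edge_rel (H_tree_edges i)"
  have p: "p \<in> verts G" and q: "q \<in> verts G" using TG_edgeD[OF kG pq] by auto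
  have w'_TH: "w' \<in> verts (TH i)" using edge_disjoint_S_treesD(3)[OF TH i] by simp
  note ci = c_props(2)[OF i]
  consider "{(p, w'), (q, c i)} \<notin> G_tree0_edges" | "{(q, w'), (p, c i)} \<notin> G_tree0_edges"
    using H_link_available[OF i pq] by blast
  then show ?thesis
  proof cases
    case 1
    then have "?R (p, w') (q, c i)"
      using pq unfolding edge_rel_def H_tree_edges_def H_links_def by blast
    also have "?R\<^sup>*\<^sup>* (q, c i) (q, w')" using H_copies_connect[OF i q ci w'_TH] .
    finally show ?thesis .
  next
    case 2
    then have "{(p, c i), (q, w')} \<in> H_links i"
      unfolding H_links_def using pq
      by (intro DiffI CollectI exI[of _ p] exI[of _ q] exI[of _ "c i"] exI[of _ w'])
        (auto simp: insert_commute)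
    then have "?R (p, c i) (q, w')" by (simp add: edge_rel_def H_tree_edges_def)
    have "?R\<^sup>*\<^sup>* (p, w') (p, c i)" using H_copies_connect[OF i p w'_TH ci] .
    also have "?R (p, c i) (q, w')" by fact
    finally show ?thesis .
  qed
qed

lemma H_tree_edges_connect:
  assumes i: "i < kH"
  shows "(edge_rel (H_tree_edges i))\<^sup>*\<^sup>* (u, v1) (u, v2)"
    "(edge_rel (H_tree_edges i))\<^sup>*\<^sup>* (u, v1) (u', w)"
proof -
  let ?R = "edge_rel (H_tree_edges i)"
  have V: "v1 \<in> verts (TH i)" "v2 \<in> verts (TH i)" "w' \<in> verts (TH i)" "w \<in> verts (TH i)"
    using edge_disjoint_S_treesD(3)[OF TH i] w by auto
  show "?R\<^sup>*\<^sup>* (u, v1) (u, v2)" using H_copies_connect[OF i u_verts V(1,2)] .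
  have "?R\<^sup>*\<^sup>* ((\<lambda>p. (p, w')) u) ((\<lambda>p. (p, w')) u')"
    using TG_connects[OF kG]
    by (rule rtranclp_lift) (simp add: adj_def H_links_connect[OF i])
  then have "?R\<^sup>*\<^sup>* (u, w') (u', w')" by simp
  with H_copies_connect[OF i u_verts V(1,3)] H_copies_connect[OF i u'_verts V(3,4)]
  show "?R\<^sup>*\<^sup>* (u, v1) (u', w)" by (blast intro: rtranclp_trans)
qed

lemma G_tree_edgesE:
  assumes "j < kG" "e \<in> G_tree_edges j h"
  obtains p q s r where "e = {(p, s), (q, r)}" "{p, q} \<in> edges (TG j)"
  using assms ab unfolding G_tree_edges_def G_copy_def by blast

lemma H_tree_edgesE:
  assumes "e \<in> H_tree_edges i"
  obtains (copy) p g d where "e = {(p, g), (p, d)}" "{g, d} \<in> edges (TH i)"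
    | (link) p q g d where "e = {(p, g), (q, d)}" "{p, q} \<in> edges (TG 0)" "{g, d} = {w', c i}"
      "e \<notin> G_tree0_edges"
  using assms unfolding H_tree_edges_def H_copies_def H_links_def by blast

lemma G_tree_edges_disjoint:
  assumes j: "j < kG" "j' < kG" and ne: "(j, h) \<noteq> (j', h')"
  shows "G_tree_edges j h \<inter> G_tree_edges j' h' = {}"
proof (cases "j = j'")
  case True
  then have "h \<noteq> h'" using ne by simp
  then show ?thesis
    using True ab_props[OF j(1)] ab[OF j(1)] uu'
    by (auto simp: G_tree_edges_def G_copy_def doubleton_eq_iff)
next
  case False
  show ?thesis
  proof (rule equals0I)
    fix e assume e: "e \<in> G_tree_edges j h \<inter> G_tree_edges j' h'"
    then have "e \<in> G_tree_edges j h" by simp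
    then obtain p q s r where pq: "e = {(p, s), (q, r)}" "{p, q} \<in> edges (TG j)"
      by (rule G_tree_edgesE[OF j(1)])
    from e have "e \<in> G_tree_edges j' h'" by simp
    then obtain p' q' s' r' where pq': "e = {(p', s'), (q', r')}" "{p', q'} \<in> edges (TG j')"
      by (rule G_tree_edgesE[OF j(2)])
    have "{p, q} = {p', q'}" using pq(1) pq'(1) doubleton_pair_eqD by metis
    then show False using edge_disjoint_S_trees_disjoint[OF TG j False] pq(2) pq'(2) by metis
  qed
qed

lemma H_tree_edges_disjoint:
  assumes i: "i < kH" "i' < kH" "i \<noteq> i'"
  shows "H_tree_edges i \<inter> H_tree_edges i' = {}"
proof (rule equals0I)
  fix e assume e: "e \<in> H_tree_edges i \<inter> H_tree_edges i'"
  have no_link: False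
    if "{(p, g), (p, d)} = {(p', g'), (q', d')}" "{p', q'} \<in> edges (TG 0)" for p g d p' g' q' d'
    using doubleton_pair_eqD[OF that(1)] TG_edgeD(1)[OF kG that(2)] by (auto simp: doubleton_eq_iff)
  from e have "e \<in> H_tree_edges i" by simp
  then show False
  proof (cases rule: H_tree_edgesE)
    case (copy p g d)
    from e have "e \<in> H_tree_edges i'" by simp
    then show False
    proof (cases rule: H_tree_edgesE)
      case (copy p' g' d')
      then have "{g, d} = {g', d'}" using \<open>e = {(p, g), (p, d)}\<close> doubleton_pair_eqD by metis
      then show False
        using edge_disjoint_S_trees_disjoint[OF TH i] \<open>{g, d} \<in> edges (TH i)\<close> copy(2) by metis
    qed (use copy no_link in metis)
  next
    case (link p q g d)
    from e have "e \<in> H_tree_edges i'" by simp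
    then show False
    proof (cases rule: H_tree_edgesE)
      case (link p' q' g' d')
      then have "{w', c i} = {w', c i'}"
        using \<open>e = {(p, g), (q, d)}\<close> \<open>{g, d} = {w', c i}\<close> doubleton_pair_eqD by metis
      then have "c i = c i'" using c_props(1)[OF i(1)] by (auto simp: doubleton_eq_iff)
      then show False using edge_disjoint_S_trees_disjoint[OF TH i] c i by metis
    qed (use link no_link in metis)
  qed
qed

lemma G_H_tree_edges_disjoint:
  assumes j: "j < kG" and h: "h \<in> verts H"
  shows "G_tree_edges j h \<inter> H_tree_edges i = {}"
proof (rule equals0I)
  fix e assume e: "e \<in> G_tree_edges j h \<inter> H_tree_edges i"
  then have "e \<in> G_tree_edges j h" by simp
  then obtain p q s r where pq: "e = {(p, s), (q, r)}" "{p, q} \<in> edges (TG j)"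
    by (rule G_tree_edgesE[OF j])
  from e have "e \<in> H_tree_edges i" by simp
  then show False
  proof (cases rule: H_tree_edgesE)
    case (copy p' g d)
    then have "{p, q} = {p', p'}" using pq doubleton_pair_eqD by metis
    then show False using TG_edgeD(1)[OF j pq(2)] by (auto simp: doubleton_eq_iff)
  next
    case (link p' q' g d)
    then have "{p, q} = {p', q'}" using pq doubleton_pair_eqD by metis
    show False
    proof (cases "j = 0")
      case True
      then show False using e h link(4) unfolding G_tree0_edges_def by blast
    next
      case False
      then show False
        using edge_disjoint_S_trees_disjoint[OF TG j kG] pq(2) link(2) \<open>{p, q} = {p', q'}\<close> by metis
    qed
  qed
qed

theorem edge_disjoint_S_trees_lex_prod:
  "\<exists>T. edge_disjoint_S_trees (lex_prod G H) {(u, v1), (u, v2), (u', w)}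
     (kH + kG * card (verts H)) T"
proof -
  define I where "I = {..<kH} <+> ({..<kG} \<times> verts H)"
  define E where "E = case_sum H_tree_edges (case_prod G_tree_edges)"
  have fin: "finite (verts H)" using H by (simp add: graph_def)
  have "card I = kH + kG * card (verts H)"
    by (simp add: I_def card_Plus card_cartesian_product fin)
  moreover have "\<exists>T. edge_disjoint_S_trees (lex_prod G H) {(u, v1), (u, v2), (u', w)} (card I) T"
  proof (rule edge_disjoint_S_trees_of_edge_sets[OF graph_lex_prod[OF G H]])
    show "{(u, v1), (u, v2), (u', w)} \<subseteq> verts (lex_prod G H)"
      using u_verts u'_verts v1 v2 w w' by (auto simp: verts_lex_prod)
    show "finite I" using fin by (simp add: I_def)
    show "E k \<subseteq> edges (lex_prod G H)" if "k \<in> I" for k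
      using that G_tree_edges_subset H_tree_edges_subset by (fastforce simp: I_def E_def)
    show "(edge_rel (E k))\<^sup>*\<^sup>* (u, v1) v" if "k \<in> I" "v \<in> {(u, v1), (u, v2), (u', w)}" for k v
      using that G_tree_edges_connect H_tree_edges_connect by (auto simp: I_def E_def)
    show "E k \<inter> E k' = {}" if "k \<in> I" "k' \<in> I" "k \<noteq> k'" for k k'
      using that unfolding I_def E_def
      by (elim PlusE SigmaE)
        (simp_all add: Int_commute G_tree_edges_disjoint H_tree_edges_disjoint
          G_H_tree_edges_disjoint)
  qed simp
  ultimately show ?thesis by simp
qed

end

lemma edge_disjoint_S_trees_neighbour:
  assumes T: "edge_disjoint_S_trees G S k T" and v: "v \<in> S" "v' \<in> S" "v \<noteq> v'"
  obtains c where "\<And>i. i < k \<Longrightarrow> {v, c i} \<in> edges (T i)"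
proof -
  have "\<exists>c. {v, c} \<in> edges (T i)" if "i < k" for i
  proof -
    have "(adj (T i))\<^sup>*\<^sup>* v v'"
      using edge_disjoint_S_treesD(2,3)[OF T that] v unfolding connected_def by blast
    then obtain c where "adj (T i) v c" using v(3) by (metis converse_rtranclpE)
    then show ?thesis unfolding adj_def by blast
  qed
  then show ?thesis using that by metis
qed

lemma edge_disjoint_S_trees_neighbour_pairs:
  assumes T: "edge_disjoint_S_trees G S k T" and S: "u \<in> S" "u' \<in> S" "t \<in> S"
    and d: "u \<noteq> u'" "t \<noteq> u" "t \<noteq> u'"
  obtains a b where
    "\<And>j. j < k \<Longrightarrow> {u, a j} \<in> edges (T j) \<and> {u', b j} \<in> edges (T j) \<and> \<not> (a j = u' \<and> b j = u)"
proof -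
  have "\<exists>a b. {u, a} \<in> edges (T j) \<and> {u', b} \<in> edges (T j) \<and> \<not> (a = u' \<and> b = u)"
    if "j < k" for j
    using connected_neighbours_distinct_edges[OF edge_disjoint_S_treesD(2)[OF T that] _ _ _ d]
      edge_disjoint_S_treesD(3)[OF T that] S unfolding adj_def by blast
  then show ?thesis using that by metis
qed

lemma edge_disjoint_S_trees_lex_prod_two_in_layer:
  assumes G: "graph G" and H: "graph H" and "connected G"
    and cardG: "3 \<le> card (verts G)" and cardH: "3 \<le> card (verts H)"
    and u: "u \<in> verts G" "u' \<in> verts G" "u \<noteq> u'"
    and v: "v1 \<in> verts H" "v2 \<in> verts H" "w \<in> verts H" "v1 \<noteq> v2"
  shows "\<exists>T. edge_disjoint_S_trees (lex_prod G H) {(u, v1), (u, v2), (u', w)}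
           (lambda3 H + lambda3 G * card (verts H)) T"
proof -
  have fin: "finite (verts G)" "finite (verts H)" using G H by (simp_all add: graph_def)
  obtain t where t: "t \<in> verts G" "t \<noteq> u" "t \<noteq> u'"
    by (rule card_ge_3_obtain_third[OF fin(1) cardG])
  obtain w' where w': "w' \<in> verts H" "w' \<noteq> v1" "w' \<noteq> v2" "w \<in> {v1, v2, w'}"
    by (rule card_ge_3_obtain_third_covering[OF fin(2) cardH v(3)])
  define SG where "SG = {u, u', t}"
  define SH where "SH = {v1, v2, w'}"
  have SG: "SG \<subseteq> verts G" "card SG = 3" using u t by (auto simp: SG_def)
  have SH: "SH \<subseteq> verts H" "card SH = 3" using v w' by (auto simp: SH_def)
  obtain TG where TG: "edge_disjoint_S_trees G SG (lambdaS G SG) TG"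
    using lambdaS_attained[OF G, of u SG u'] u by (auto simp: SG_def)
  obtain TH where TH: "edge_disjoint_S_trees H SH (lambdaS H SH) TH"
    using lambdaS_attained[OF H, of v1 SH v2] v by (auto simp: SH_def)
  obtain a b where ab: "\<And>j. j < lambdaS G SG \<Longrightarrow>
      {u, a j} \<in> edges (TG j) \<and> {u', b j} \<in> edges (TG j) \<and> \<not> (a j = u' \<and> b j = u)"
    using edge_disjoint_S_trees_neighbour_pairs[OF TG, of u u' t] u t by (auto simp: SG_def)
  obtain c where c: "\<And>i. i < lambdaS H SH \<Longrightarrow> {w', c i} \<in> edges (TH i)"
    using edge_disjoint_S_trees_neighbour[OF TH, of w' v1] w' by (auto simp: SH_def)
  have "0 < lambdaS G SG"
    using lambdaS_pos[OF G \<open>connected G\<close> SG(1), of u u'] u by (simp add: SG_def)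
  then interpret lex_prod_tree_packing G H u u' v1 v2 w w' SG "lambdaS G SG" TG a b
      "lambdaS H SH" TH c
    using G H u v w' TG TH ab c by unfold_locales (auto simp: SG_def SH_def)
  have "lambda3 H + lambda3 G * card (verts H) \<le> lambdaS H SH + lambdaS G SG * card (verts H)"
    using lambda3_le_lambdaS[OF G SG] lambda3_le_lambdaS[OF H SH] by (simp add: add_mono)
  then show ?thesis using edge_disjoint_S_trees_lex_prod edge_disjoint_S_trees_le by blast
qed

theorem lemma3p2:
  fixes G :: "'a graph" and H :: "'b graph" and x y z :: "'a \<times> 'b"
  assumes "graph G" and "graph H"
    and "connected G" and "connected H"
    and "card (verts G) \<ge> 3" and "card (verts H) \<ge> 3"
    and "x \<in> verts (lex_prod G H)" and "y \<in> verts (lex_prod G H)"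
    and "z \<in> verts (lex_prod G H)"
    and "x \<noteq> y"
    and "fst x = fst y" and "fst z \<noteq> fst x"
  shows "\<exists>T. edge_disjoint_S_trees (lex_prod G H) {x, y, z}
              (lambda3 H + lambda3 G * card (verts H)) T"
proof -
  obtain u v1 v2 u' w where xyz: "x = (u, v1)" "y = (u, v2)" "z = (u', w)"
    using assms(11) by (metis prod.collapse)
  show ?thesis
    using edge_disjoint_S_trees_lex_prod_two_in_layer[OF assms(1,2,3,5,6), of u u' v1 v2 w] assms(7-12)
    unfolding xyz by (simp add: verts_lex_prod)
qed

end
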